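(* Let $c_1=\frac{1}{\sqrt{\pi}\,e^{1/12}}$. Let $N\ge 1$ be an integer, $\varepsilon>0$, and $0<c<c_1^2/16$, and let $m=cN/\varepsilon^2$ with $\lambda:=m/N\ge 2$. Let $Y_1,\dots,Y_N$ be independent random variables, each with distribution $\mathrm{Poisson}(\lambda)$. Then \[\Pr\Big[\sum_{j=1}^N\big|Y_j-\tfrac{m}{N}\big|<2m\varepsilon\Big]\ \le\ \frac{4}{c_1^2}\cdot\frac1N.\] *)

theory Defs
  imports "HOL-Probability.Probability"
begin

definition c1 :: real where
  "c1 = 1 / (sqrt pi * exp (1/12))"

end

(* Write S for the sum of the |Y_j - lam|. Each summand has mean mu = E |Y - lam| and variance at
   most Var Y = lam, so Var S \<le> N lam by independence and Chebyshev gives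
   Pr [S < N mu / 2] \<le> 4 lam / (N mu^2). The mean absolute deviation of Poisson(lam) has the closed
   form mu = 2 e^-lam lam^(k+1) / k! with k = \<lfloor>lam\<rfloor>, and a Stirling-type upper bound for k!
   yields mu^2 \<ge> 16 lam / e^4 \<ge> c1^2 lam. Finally 2 m \<epsilon> = 2 N sqrt (c lam) \<le> N c1 sqrt lam / 2,
   which is at most N mu / 2. *)

theory Submission
  imports Defs
begin

lemma has_bochner_integral_measure_pmf_nat:
  fixes p :: "nat pmf" and g :: "nat \<Rightarrow> real"
  assumes "summable (\<lambda>n. pmf p n * \<bar>g n\<bar>)" and "(\<lambda>n. pmf p n * g n) sums s"
  shows "has_bochner_integral (measure_pmf p) g s"
  unfolding measure_pmf_eq_density
proof (rule has_bochner_integral_density)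
  show "has_bochner_integral (count_space UNIV) (\<lambda>n. pmf p n *\<^sub>R g n) s"
    using assms by (simp add: has_bochner_integral_iff integrable_count_space_nat_iff
        integral_count_space_nat abs_mult sums_iff)
qed auto

lemma has_bochner_integral_distr_iff:
  fixes f :: "'b \<Rightarrow> 'c::{banach, second_countable_topology}"
  assumes "f \<in> borel_measurable N" and "g \<in> measurable M N"
  shows "has_bochner_integral (distr M N g) f x \<longleftrightarrow> has_bochner_integral M (\<lambda>x. f (g x)) x"
  using assms by (simp add: has_bochner_integral_iff integrable_distr_eq integral_distr)

lemma poisson_pmf_Suc:
  assumes "0 < lam"
  shows "pmf (poisson_pmf lam) (Suc n) * real (Suc n) = lam * pmf (poisson_pmf lam) n"
  using assms by (simp add: field_simps del: of_nat_Suc)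

lemma poisson_pmf_sums:
  assumes "0 < lam"
  shows "(\<lambda>n. pmf (poisson_pmf lam) n) sums 1"
proof -
  have "(\<lambda>n. lam ^ n / fact n * exp (-lam)) sums (exp lam * exp (-lam))"
    using exp_converges[of lam] by (intro sums_mult2) (simp add: field_simps)
  then show ?thesis
    using assms by (simp add: exp_minus)
qed

lemma poisson_pmf_mean_sums:
  assumes "0 < lam"
  shows "(\<lambda>n. pmf (poisson_pmf lam) n * real n) sums lam"
proof -
  have "(\<lambda>n. pmf (poisson_pmf lam) (Suc n) * real (Suc n)) sums (lam * 1)"
    unfolding poisson_pmf_Suc[OF assms] by (intro sums_mult poisson_pmf_sums assms)
  then show ?thesis
    by (subst (asm) sums_Suc_iff) simp
qed

lemma poisson_pmf_second_moment_sums: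
  assumes "0 < lam"
  shows "(\<lambda>n. pmf (poisson_pmf lam) n * real n ^ 2) sums (lam ^ 2 + lam)"
proof -
  have "pmf (poisson_pmf lam) (Suc n) * real (Suc n) ^ 2
      = lam * (pmf (poisson_pmf lam) n * real n + pmf (poisson_pmf lam) n)" for n
  proof -
    have "pmf (poisson_pmf lam) (Suc n) * real (Suc n) ^ 2
        = pmf (poisson_pmf lam) (Suc n) * real (Suc n) * real (Suc n)"
      by (simp add: power2_eq_square)
    also have "\<dots> = lam * pmf (poisson_pmf lam) n * (real n + 1)"
      by (simp only: poisson_pmf_Suc[OF assms]) simp
    finally show ?thesis
      by (simp add: algebra_simps)
  qed
  moreover have "(\<lambda>n. lam * (pmf (poisson_pmf lam) n * real n + pmf (poisson_pmf lam) n))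
      sums (lam * (lam + 1))"
    by (intro sums_mult sums_add poisson_pmf_mean_sums poisson_pmf_sums assms)
  ultimately have "(\<lambda>n. pmf (poisson_pmf lam) (Suc n) * real (Suc n) ^ 2) sums (lam ^ 2 + lam)"
    by (simp add: power2_eq_square algebra_simps)
  then show ?thesis
    by (subst (asm) sums_Suc_iff) simp
qed

lemma poisson_mean:
  assumes "0 < lam"
  shows "has_bochner_integral (measure_pmf (poisson_pmf lam)) real lam"
  using poisson_pmf_mean_sums[OF assms]
  by (intro has_bochner_integral_measure_pmf_nat) (auto simp: sums_iff)

lemma poisson_second_moment:
  assumes "0 < lam"
  shows "has_bochner_integral (measure_pmf (poisson_pmf lam)) (\<lambda>n. real n ^ 2) (lam ^ 2 + lam)"
  using poisson_pmf_second_moment_sums[OF assms]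
  by (intro has_bochner_integral_measure_pmf_nat) (auto simp: sums_iff)

lemma poisson_variance:
  assumes "0 < lam"
  shows "has_bochner_integral (measure_pmf (poisson_pmf lam)) (\<lambda>n. (real n - lam) ^ 2) lam"
proof -
  have "has_bochner_integral (measure_pmf (poisson_pmf lam))
      (\<lambda>n. real n ^ 2 - 2 * lam * real n + lam ^ 2) ((lam ^ 2 + lam) - 2 * lam * lam + lam ^ 2)"
    using poisson_mean[OF assms] poisson_second_moment[OF assms]
    by (intro has_bochner_integral_add has_bochner_integral_diff has_bochner_integral_mult_right)
       (auto simp: has_bochner_integral_iff)
  then show ?thesis
    by (simp add: power2_eq_square algebra_simps)
qed

definition poisson_mean_abs_dev :: "real \<Rightarrow> real" where
  "poisson_mean_abs_dev lam = 2 * exp (-lam) * lam ^ Suc (nat \<lfloor>lam\<rfloor>) / fact (nat \<lfloor>lam\<rfloor>)"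

lemma sum_deviation_mult_power_div_fact:
  fixes lam :: real
  shows "(\<Sum>n\<le>k. (lam - real n) * (lam ^ n / fact n)) = lam ^ Suc k / fact k"
proof (induction k)
  case 0
  then show ?case by simp
next
  case (Suc k)
  have "(lam - real (Suc k)) * (lam ^ Suc k / fact (Suc k))
      = lam ^ Suc (Suc k) / fact (Suc k) - lam ^ Suc k / fact k"
    by (simp add: field_simps del: of_nat_Suc)
  with Suc show ?case
    by simp
qed

lemma poisson_mean_abs_deviation:
  assumes "0 < lam"
  shows "has_bochner_integral (measure_pmf (poisson_pmf lam)) (\<lambda>n. \<bar>real n - lam\<bar>)
           (poisson_mean_abs_dev lam)"
proof -
  define k where "k = nat \<lfloor>lam\<rfloor>"
  \<comment> \<open>\<open>\<bar>n - lam\<bar> = (n - lam) + 2 h n\<close>; the first part has mean 0, and \<open>h\<close> vanishes beyond \<open>k\<close>,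
    where its series telescopes\<close>
  define h where "h n = max (lam - real n) 0" for n :: nat
  have "n \<le> k \<longleftrightarrow> real n \<le> lam" for n
    using assms unfolding k_def by (simp add: le_nat_iff le_floor_iff)
  then have h_eq: "h n = (if n \<le> k then lam - real n else 0)" for n
    by (simp add: h_def)
  have "(\<lambda>n. pmf (poisson_pmf lam) n * h n) sums (\<Sum>n\<le>k. pmf (poisson_pmf lam) n * h n)"
    by (rule sums_finite) (auto simp: h_eq)
  also have "(\<Sum>n\<le>k. pmf (poisson_pmf lam) n * h n)
      = exp (-lam) * (\<Sum>n\<le>k. (lam - real n) * (lam ^ n / fact n))"
    using assms by (simp add: h_eq sum_distrib_left ac_simps)
  finally have "has_bochner_integral (measure_pmf (poisson_pmf lam)) h
      (exp (-lam) * lam ^ Suc k / fact k)"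
    unfolding sum_deviation_mult_power_div_fact
    by (intro has_bochner_integral_measure_pmf_nat) (auto simp: sums_iff h_def)
  moreover have "has_bochner_integral (measure_pmf (poisson_pmf lam)) (\<lambda>n. real n - lam) 0"
    using has_bochner_integral_diff[OF poisson_mean[OF assms(1)], of "\<lambda>_. lam" lam]
    by (simp add: has_bochner_integral_iff)
  ultimately have "has_bochner_integral (measure_pmf (poisson_pmf lam)) (\<lambda>n. (real n - lam) + 2 * h n)
      (0 + 2 * (exp (-lam) * lam ^ Suc k / fact k))"
    by (intro has_bochner_integral_add has_bochner_integral_mult_right)
  moreover have "(\<lambda>n. (real n - lam) + 2 * h n) = (\<lambda>n. \<bar>real n - lam\<bar>)"
    by (auto simp: h_def fun_eq_iff max_def abs_if)
  ultimately show ?thesis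
    by (simp add: poisson_mean_abs_dev_def k_def mult.assoc)
qed

lemma one_minus_mult_exp_le:
  fixes y :: real
  assumes "0 \<le> y"
  shows "(1 - y) * exp y \<le> (1 + y) * exp (-y)"
proof -
  let ?f = "\<lambda>y::real. (1 + y) * exp (-y) - (1 - y) * exp y"
  have "?f 0 \<le> ?f y"
  proof (rule DERIV_nonneg_imp_nondecreasing[OF assms])
    fix x :: real
    assume "0 \<le> x" "x \<le> y"
    have "(?f has_real_derivative x * (exp x - exp (-x))) (at x)"
      by (auto intro!: derivative_eq_intros simp: algebra_simps)
    moreover have "0 \<le> x * (exp x - exp (-x))"
      using \<open>0 \<le> x\<close> by auto
    ultimately show "\<exists>d. (?f has_real_derivative d) (at x) \<and> 0 \<le> d"
      by blast
  qed
  then show ?thesis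
    by simp
qed

lemma exp_two_mult_power_le:
  assumes "1 \<le> k"
  shows "exp 2 * real k ^ (2 * k + 1) \<le> real (k + 1) ^ (2 * k + 1)"
proof -
  \<comment> \<open>for this \<open>y\<close>, \<open>exp (2y) \<le> (1 + y) / (1 - y) = (k + 1) / k\<close>\<close>
  define y where "y = 1 / (2 * real k + 1)"
  have y: "0 \<le> y" "y < 1"
    using assms by (auto simp: y_def)
  have "(1 - y) * exp (2 * y) = (1 - y) * exp y * exp y"
    by (simp add: exp_double power2_eq_square)
  also have "\<dots> \<le> (1 + y) * exp (-y) * exp y"
    using one_minus_mult_exp_le[OF y(1)] by (intro mult_right_mono) auto
  also have "\<dots> = 1 + y"
    by (simp add: exp_minus)
  finally have "exp (2 * y) \<le> (1 + y) / (1 - y)"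
    using y by (simp add: field_simps)
  also have "(1 + y) / (1 - y) = real (k + 1) / real k"
  proof -
    have "(1 + y) * real k = (1 - y) * real (k + 1)"
      by (simp add: y_def field_simps)
    then show ?thesis
      using assms y by (simp add: field_simps)
  qed
  finally have "exp (2 * y) ^ (2 * k + 1) \<le> (real (k + 1) / real k) ^ (2 * k + 1)"
    by (intro power_mono) auto
  moreover have "exp (2 * y) ^ (2 * k + 1) = exp 2"
  proof -
    have "real (2 * k + 1) * (2 * y) = 2"
      by (simp add: y_def field_simps)
    then show ?thesis
      by (metis exp_of_nat_mult)
  qed
  ultimately have "exp 2 \<le> (real (k + 1) / real k) ^ (2 * k + 1)"
    by simp
  then show ?thesis
    using assms by (simp add: field_simps power_divide)
qed

lemma fact_square_mult_exp_le:
  assumes "1 \<le> k"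
  shows "fact k ^ 2 * exp (2 * real k) \<le> exp 2 * real k ^ (2 * k + 1)"
  using assms
proof (induction k rule: dec_induct)
  case base
  then show ?case by simp
next
  case (step k)
  have "fact (Suc k) ^ 2 * exp (2 * real (Suc k))
      = real (k + 1) ^ 2 * exp 2 * (fact k ^ 2 * exp (2 * real k))"
    by (simp add: distrib_left exp_add power_mult_distrib)
  also have "\<dots> \<le> real (k + 1) ^ 2 * exp 2 * (exp 2 * real k ^ (2 * k + 1))"
    using step.IH by (intro mult_left_mono) auto
  also have "\<dots> \<le> real (k + 1) ^ 2 * exp 2 * real (k + 1) ^ (2 * k + 1)"
    using exp_two_mult_power_le[OF step.hyps(1)] by (intro mult_left_mono) auto
  also have "\<dots> = exp 2 * real (Suc k) ^ (2 * Suc k + 1)"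
    by (simp add: power_add power2_eq_square algebra_simps)
  finally show ?case .
qed

lemma two_div_exp_one_le:
  fixes t :: real
  assumes "0 \<le> t" and "t \<le> 1"
  shows "2 / exp 1 \<le> (1 + t) * exp (-t)"
proof -
  let ?f = "\<lambda>t::real. (1 + t) * exp (-t)"
  have "?f 1 \<le> ?f t"
  proof (rule DERIV_nonpos_imp_nonincreasing[OF assms(2)])
    fix x :: real
    assume "t \<le> x" "x \<le> 1"
    have "(?f has_real_derivative - x * exp (-x)) (at x)"
      by (auto intro!: derivative_eq_intros simp: algebra_simps)
    moreover have "- x * exp (-x) \<le> 0"
      using \<open>t \<le> x\<close> assms(1) by simp
    ultimately show "\<exists>d. (?f has_real_derivative d) (at x) \<and> d \<le> 0"
      by blast
  qed
  then show ?thesis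
    by (simp add: exp_minus field_simps)
qed

lemma poisson_mean_abs_dev_square_ge:
  fixes lam :: real
  assumes "1 \<le> lam"
  shows "16 * lam / exp 4 \<le> poisson_mean_abs_dev lam ^ 2"
proof -
  define k where "k = nat \<lfloor>lam\<rfloor>"
  \<comment> \<open>\<open>(e^-lam lam^(k+1) / k!)^2 \<ge> lam e^-2 ((1 + t) e^-t)^2\<close> by the bound on \<open>k!\<close>
    and Bernoulli, and \<open>(1 + t) e^-t \<ge> 2 / e\<close>\<close>
  define t where "t = lam - real k"
  have k: "1 \<le> k" "real k \<le> lam"
    using assms unfolding k_def by linarith+
  have t: "0 \<le> t" "t \<le> 1"
    using assms unfolding t_def k_def by linarith+
  have growth: "(1 + t) ^ 2 \<le> (lam / real k) ^ (2 * k + 1)"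
  proof -
    have "1 + t \<le> 1 + real k * (t / real k)"
      using k by simp
    also have "\<dots> \<le> (1 + t / real k) ^ k"
      using t by (intro Bernoulli_inequality) (simp add: order.trans[of _ 0])
    also have "1 + t / real k = lam / real k"
      using k by (simp add: t_def field_simps)
    finally have "(1 + t) ^ 2 \<le> (lam / real k) ^ (k * 2)"
      using t by (simp add: power_mult power_mono)
    also have "\<dots> \<le> (lam / real k) ^ (2 * k + 1)"
      using k by (intro power_increasing) auto
    finally show ?thesis .
  qed
  have "4 * lam / exp 4 = lam * (2 / exp 1) ^ 2 / exp 2"
    by (simp add: power2_eq_square exp_add[symmetric])
  also have "\<dots> \<le> lam * ((1 + t) * exp (-t)) ^ 2 / exp 2"
    using two_div_exp_one_le[OF t] assms(1)
    by (intro divide_right_mono mult_left_mono power_mono) auto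
  also have "\<dots> = lam * exp (-t) ^ 2 * (1 + t) ^ 2 / exp 2"
    by (simp add: power_mult_distrib)
  also have "\<dots> \<le> lam * exp (-t) ^ 2 * (lam / real k) ^ (2 * k + 1) / exp 2"
    using growth assms(1) by (intro divide_right_mono mult_left_mono) auto
  also have "\<dots> = exp (-lam) ^ 2 * lam ^ (2 * k + 2) / (exp 2 * real k ^ (2 * k + 1) / exp (2 * real k))"
  proof -
    have "exp (-t) ^ 2 = exp (-lam) ^ 2 * exp (2 * real k)"
      by (simp add: t_def exp_double[symmetric] exp_add[symmetric] algebra_simps)
    then show ?thesis
      using k by (simp add: power_divide field_simps)
  qed
  also have "\<dots> \<le> exp (-lam) ^ 2 * lam ^ (2 * k + 2) / fact k ^ 2"
    using fact_square_mult_exp_le[OF k(1)] assms(1) k(1)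
    by (intro divide_left_mono) (auto simp: field_simps)
  also have "\<dots> = (exp (-lam) * lam ^ Suc k / fact k) ^ 2"
  proof -
    have "lam ^ (2 * k + 2) = (lam ^ Suc k) ^ 2"
      by (simp only: power_mult[symmetric]) (simp add: mult.commute)
    then show ?thesis
      by (simp add: power_mult_distrib power_divide)
  qed
  finally show ?thesis
    by (simp add: poisson_mean_abs_dev_def k_def power_mult_distrib power_divide)
qed

lemma c1_square_le: "c1 ^ 2 \<le> 16 / exp 4"
proof -
  have "exp 4 = exp (1::real) ^ 4"
    by (simp add: exp_of_nat_mult[symmetric])
  also have "\<dots> \<le> (272 / 100) ^ 4"
    using e_less_272 by (intro power_mono) auto
  also have "\<dots> \<le> 16 * (3 * (1 + 1 / 6))"
    by (simp add: power_divide)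
  also have "\<dots> \<le> 16 * (pi * exp (1 / 6))"
    using pi_gt3 exp_ge_add_one_self[of "1 / 6"] by (intro mult_left_mono mult_mono) auto
  finally have "c1 ^ 2 * exp 4 \<le> c1 ^ 2 * (16 * (pi * exp (1 / 6)))"
    by (simp add: mult_left_mono)
  also have "\<dots> = 16"
    by (simp add: c1_def power_divide power_mult_distrib exp_double[symmetric])
  finally show ?thesis
    by (simp add: field_simps)
qed

lemma (in prob_space) indep_vars_sum_square:
  fixes Z :: "'i \<Rightarrow> 'a \<Rightarrow> real"
  assumes "finite I" and indep: "indep_vars (\<lambda>_. borel) Z I"
    and sq_int: "\<And>i. i \<in> I \<Longrightarrow> integrable M (\<lambda>x. Z i x ^ 2)"
    and centered: "\<And>i. i \<in> I \<Longrightarrow> expectation (Z i) = 0"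
  shows "has_bochner_integral M (\<lambda>x. (\<Sum>i\<in>I. Z i x) ^ 2) (\<Sum>i\<in>I. expectation (\<lambda>x. Z i x ^ 2))"
proof -
  have int: "integrable M (Z i)" if "i \<in> I" for i
  proof (rule square_integrable_imp_integrable[OF _ sq_int[OF that]])
    show "random_variable borel (Z i)"
      using indep that unfolding indep_vars_def by blast
  qed
  have products: "has_bochner_integral M (\<lambda>x. Z i x * Z j x)
      (if i = j then expectation (\<lambda>x. Z i x ^ 2) else 0)" if "i \<in> I" "j \<in> I" for i j
  proof (cases "i = j")
    case True
    then show ?thesis
      using sq_int[OF that(1)] by (simp add: has_bochner_integral_iff power2_eq_square)
  next
    case False
    have pair: "indep_vars (\<lambda>_. borel) Z {i, j}"
      using indep by (rule indep_vars_subset) (use that in auto)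
    have "has_bochner_integral M (\<lambda>x. \<Prod>l\<in>{i, j}. Z l x) (\<Prod>l\<in>{i, j}. expectation (Z l))"
      using pair int that
      by (auto simp: has_bochner_integral_iff intro!: indep_vars_integrable indep_vars_lebesgue_integral)
    then show ?thesis
      using False that centered by simp
  qed
  have "has_bochner_integral M (\<lambda>x. \<Sum>i\<in>I. \<Sum>j\<in>I. Z i x * Z j x)
      (\<Sum>i\<in>I. \<Sum>j\<in>I. if i = j then expectation (\<lambda>x. Z i x ^ 2) else 0)"
    using products by (intro has_bochner_integral_sum) auto
  moreover have "(\<Sum>i\<in>I. Z i x) ^ 2 = (\<Sum>i\<in>I. \<Sum>j\<in>I. Z i x * Z j x)" for x
    by (simp add: power2_eq_square sum_product)
  ultimately show ?thesis
    using \<open>finite I\<close> by (simp add: sum.delta)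
qed

lemma (in prob_space) indep_vars_sum_deviation_prob_le:
  fixes X :: "'i \<Rightarrow> 'a \<Rightarrow> real" and \<mu> v a :: real
  assumes "finite I" and indep: "indep_vars (\<lambda>_. borel) X I"
    and sq_int: "\<And>i. i \<in> I \<Longrightarrow> integrable M (\<lambda>x. X i x ^ 2)"
    and mean: "\<And>i. i \<in> I \<Longrightarrow> expectation (X i) = \<mu>"
    and var: "\<And>i. i \<in> I \<Longrightarrow> variance (X i) \<le> v"
    and "0 < a"
  shows "prob {x \<in> space M. a \<le> \<bar>(\<Sum>i\<in>I. X i x) - card I * \<mu>\<bar>} \<le> card I * v / a ^ 2"
proof -
  define Z where "Z i = (\<lambda>x. X i x - \<mu>)" for i
  have rv: "random_variable borel (X i)" if "i \<in> I" for i
    using indep that unfolding indep_vars_def by blast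
  have int: "integrable M (X i)" if "i \<in> I" for i
    using rv[OF that] sq_int[OF that] by (rule square_integrable_imp_integrable)
  have Z_sq_int: "integrable M (\<lambda>x. Z i x ^ 2)" if "i \<in> I" for i
    using sq_int[OF that] int[OF that]
    by (simp add: Z_def power2_diff)
  have Z_indep: "indep_vars (\<lambda>_. borel) Z I"
    unfolding Z_def by (rule indep_vars_compose2[OF indep]) simp
  have Z_centered: "expectation (Z i) = 0" if "i \<in> I" for i
    using int[OF that] mean[OF that] by (simp add: Z_def prob_space)
  have "has_bochner_integral M (\<lambda>x. (\<Sum>i\<in>I. Z i x) ^ 2) (\<Sum>i\<in>I. expectation (\<lambda>x. Z i x ^ 2))"
    by (rule indep_vars_sum_square[OF \<open>finite I\<close> Z_indep Z_sq_int Z_centered])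
  moreover have "expectation (\<lambda>x. Z i x ^ 2) = variance (X i)" if "i \<in> I" for i
    using mean[OF that] by (simp add: Z_def)
  ultimately have sum_sq: "has_bochner_integral M (\<lambda>x. (\<Sum>i\<in>I. Z i x) ^ 2)
      (\<Sum>i\<in>I. variance (X i))"
    by (metis (no_types, lifting) sum.cong)
  have "(\<Sum>i\<in>I. X i x) - card I * \<mu> = (\<Sum>i\<in>I. Z i x)" for x
    by (simp add: Z_def sum_subtractf)
  then have "prob {x \<in> space M. a \<le> \<bar>(\<Sum>i\<in>I. X i x) - card I * \<mu>\<bar>}
      = prob {x \<in> space M. a \<le> \<bar>\<Sum>i\<in>I. Z i x\<bar>}"
    by simp
  also have "\<dots> \<le> expectation (\<lambda>x. (\<Sum>i\<in>I. Z i x) ^ 2) / a ^ 2"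
  proof (rule second_moment_method)
    show "(\<lambda>x. \<Sum>i\<in>I. Z i x) \<in> borel_measurable M"
      using rv by (simp add: Z_def)
  qed (use sum_sq \<open>0 < a\<close> in \<open>auto simp: has_bochner_integral_iff\<close>)
  also have "\<dots> \<le> card I * v / a ^ 2"
    using sum_sq var sum_mono[of I "\<lambda>i. variance (X i)" "\<lambda>_. v"]
    by (auto simp: has_bochner_integral_iff intro!: divide_right_mono)
  finally show ?thesis .
qed

lemma (in prob_space) poisson_sum_abs_deviation_prob_le:
  fixes Y :: "'i \<Rightarrow> 'a \<Rightarrow> nat" and lam a :: real
  assumes "finite I" and indep: "indep_vars (\<lambda>_. count_space UNIV) Y I"
    and distr: "\<And>i. i \<in> I \<Longrightarrow> distr M (count_space UNIV) (Y i) = measure_pmf (poisson_pmf lam)"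
    and "0 < lam" and "0 < a"
  shows "prob {x \<in> space M.
             a \<le> \<bar>(\<Sum>i\<in>I. \<bar>real (Y i x) - lam\<bar>) - card I * poisson_mean_abs_dev lam\<bar>}
           \<le> card I * lam / a ^ 2"
proof (rule indep_vars_sum_deviation_prob_le[OF \<open>finite I\<close> _ _ _ _ \<open>0 < a\<close>])
  have rv: "Y i \<in> measurable M (count_space UNIV)" if "i \<in> I" for i
    using indep that unfolding indep_vars_def by blast
  have transfer: "has_bochner_integral M (\<lambda>x. g (Y i x)) c"
    if "i \<in> I" and "has_bochner_integral (measure_pmf (poisson_pmf lam)) g c"
    for i and g :: "nat \<Rightarrow> real" and c
    using that(2) has_bochner_integral_distr_iff[OF _ rv[OF that(1)], of g c]
    by (simp add: distr[OF that(1)])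
  have abs_dev: "has_bochner_integral M (\<lambda>x. \<bar>real (Y i x) - lam\<bar>) (poisson_mean_abs_dev lam)"
    if "i \<in> I" for i
    using transfer[OF that poisson_mean_abs_deviation[OF \<open>0 < lam\<close>]] .
  have abs_dev_sq: "has_bochner_integral M (\<lambda>x. \<bar>real (Y i x) - lam\<bar> ^ 2) lam" if "i \<in> I" for i
    using transfer[OF that poisson_variance[OF \<open>0 < lam\<close>]] by simp
  show "indep_vars (\<lambda>_. borel) (\<lambda>i x. \<bar>real (Y i x) - lam\<bar>) I"
    by (rule indep_vars_compose2[OF indep]) simp
  show "integrable M (\<lambda>x. \<bar>real (Y i x) - lam\<bar> ^ 2)" if "i \<in> I" for i
    using abs_dev_sq[OF that] by (simp add: has_bochner_integral_iff)
  show "expectation (\<lambda>x. \<bar>real (Y i x) - lam\<bar>) = poisson_mean_abs_dev lam" if "i \<in> I" for i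
    using abs_dev[OF that] by (simp add: has_bochner_integral_iff)
  show "variance (\<lambda>x. \<bar>real (Y i x) - lam\<bar>) \<le> lam" if "i \<in> I" for i
  proof -
    have "variance (\<lambda>x. \<bar>real (Y i x) - lam\<bar>) = lam - poisson_mean_abs_dev lam ^ 2"
      using abs_dev[OF that] abs_dev_sq[OF that]
      by (subst variance_eq) (auto simp: has_bochner_integral_iff)
    then show ?thesis
      by simp
  qed
qed

lemma (in prob_space) poisson_sum_abs_deviation_lower_tail:
  fixes Y :: "'i \<Rightarrow> 'a \<Rightarrow> nat" and lam t :: real
  assumes "finite I" and "I \<noteq> {}" and indep: "indep_vars (\<lambda>_. count_space UNIV) Y I"
    and distr: "\<And>i. i \<in> I \<Longrightarrow> distr M (count_space UNIV) (Y i) = measure_pmf (poisson_pmf lam)"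
    and "0 < lam" and "t \<le> card I * poisson_mean_abs_dev lam / 2"
  shows "prob {x \<in> space M. (\<Sum>i\<in>I. \<bar>real (Y i x) - lam\<bar>) < t}
           \<le> 4 * lam / (card I * poisson_mean_abs_dev lam ^ 2)"
proof -
  define \<mu> where "\<mu> = poisson_mean_abs_dev lam"
  define a where "a = card I * \<mu> / 2"
  have "0 < a"
    using \<open>finite I\<close> \<open>I \<noteq> {}\<close> \<open>0 < lam\<close>
    by (simp add: a_def \<mu>_def poisson_mean_abs_dev_def card_gt_0_iff)
  have rv: "Y i \<in> measurable M (count_space UNIV)" if "i \<in> I" for i
    using indep that unfolding indep_vars_def by blast
  have "a \<le> \<bar>s - card I * \<mu>\<bar>" if "s < t" for s
    using that \<open>t \<le> card I * poisson_mean_abs_dev lam / 2\<close> unfolding a_def \<mu>_def by linarith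
  then have "{x \<in> space M. (\<Sum>i\<in>I. \<bar>real (Y i x) - lam\<bar>) < t}
      \<subseteq> {x \<in> space M. a \<le> \<bar>(\<Sum>i\<in>I. \<bar>real (Y i x) - lam\<bar>) - card I * \<mu>\<bar>}"
    by blast
  then have "prob {x \<in> space M. (\<Sum>i\<in>I. \<bar>real (Y i x) - lam\<bar>) < t}
      \<le> prob {x \<in> space M. a \<le> \<bar>(\<Sum>i\<in>I. \<bar>real (Y i x) - lam\<bar>) - card I * \<mu>\<bar>}"
    using rv by (intro finite_measure_mono) (measurable, auto)
  also have "\<dots> \<le> card I * lam / a ^ 2"
    unfolding \<mu>_def
    by (rule poisson_sum_abs_deviation_prob_le[OF \<open>finite I\<close> indep distr \<open>0 < lam\<close> \<open>0 < a\<close>])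
  also have "\<dots> = 4 * lam / (card I * \<mu> ^ 2)"
    using \<open>0 < a\<close> by (simp add: a_def power2_eq_square field_simps)
  finally show ?thesis
    by (simp add: \<mu>_def)
qed

lemma (in prob_space) poisson_sum_abs_deviation_lower_tail_c1:
  fixes Y :: "'i \<Rightarrow> 'a \<Rightarrow> nat" and lam t :: real
  assumes "finite I" and "I \<noteq> {}" and indep: "indep_vars (\<lambda>_. count_space UNIV) Y I"
    and distr: "\<And>i. i \<in> I \<Longrightarrow> distr M (count_space UNIV) (Y i) = measure_pmf (poisson_pmf lam)"
    and "1 \<le> lam" and "t \<le> card I * c1 * sqrt lam / 2"
  shows "prob {x \<in> space M. (\<Sum>i\<in>I. \<bar>real (Y i x) - lam\<bar>) < t} \<le> 4 / c1 ^ 2 * (1 / card I)"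
proof -
  define \<mu> where "\<mu> = poisson_mean_abs_dev lam"
  have "0 < lam" "0 < c1" "0 < real (card I)"
    using \<open>1 \<le> lam\<close> \<open>finite I\<close> \<open>I \<noteq> {}\<close> by (auto simp: c1_def card_gt_0_iff)
  have "c1 ^ 2 * lam \<le> 16 / exp 4 * lam"
    using c1_square_le \<open>0 < lam\<close> by (intro mult_right_mono) auto
  also have "\<dots> \<le> \<mu> ^ 2"
    using poisson_mean_abs_dev_square_ge[OF \<open>1 \<le> lam\<close>] by (simp add: \<mu>_def)
  finally have \<mu>_bound: "c1 ^ 2 * lam \<le> \<mu> ^ 2" .
  have "c1 * sqrt lam = sqrt (c1 ^ 2 * lam)"
    using \<open>0 < c1\<close> by (simp add: real_sqrt_mult)
  also have "\<dots> \<le> \<mu>"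
    using \<mu>_bound \<open>0 < lam\<close> by (simp add: \<mu>_def poisson_mean_abs_dev_def real_le_lsqrt)
  finally have "card I * (c1 * sqrt lam) \<le> card I * \<mu>"
    by (simp add: mult_left_mono)
  then have "t \<le> card I * \<mu> / 2"
    using \<open>t \<le> card I * c1 * sqrt lam / 2\<close> by (simp add: mult.assoc)
  then have "prob {x \<in> space M. (\<Sum>i\<in>I. \<bar>real (Y i x) - lam\<bar>) < t} \<le> 4 * lam / (card I * \<mu> ^ 2)"
    unfolding \<mu>_def
    using poisson_sum_abs_deviation_lower_tail[OF \<open>finite I\<close> \<open>I \<noteq> {}\<close> indep distr \<open>0 < lam\<close>]
    by blast
  also have "\<dots> \<le> 4 * lam / (card I * (c1 ^ 2 * lam))"
    using \<mu>_bound \<open>0 < lam\<close> \<open>0 < real (card I)\<close> \<open>0 < c1\<close>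
    by (intro frac_le mult_left_mono) auto
  also have "\<dots> = 4 / c1 ^ 2 * (1 / card I)"
    using \<open>0 < lam\<close> by simp
  finally show ?thesis .
qed

theorem mainTheorem3:
  fixes M :: "'a measure" and Y :: "nat \<Rightarrow> 'a \<Rightarrow> nat"
    and N :: nat and \<epsilon> c m lam :: real
  assumes "prob_space M"
    and "N \<ge> 1" and "\<epsilon> > 0" and "0 < c" and "c < c1^2 / 16"
    and "m = c * real N / \<epsilon>^2" and "lam = m / real N" and "lam \<ge> 2"
    and "prob_space.indep_vars M (\<lambda>_. count_space UNIV) Y {1..N}"
    and "\<And>j. j \<in> {1..N} \<Longrightarrow> distr M (count_space UNIV) (Y j) = measure_pmf (poisson_pmf lam)"
  shows "measure M {x \<in> space M. (\<Sum>j=1..N. \<bar>real (Y j x) - m / real N\<bar>) < 2 * m * \<epsilon>}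
           \<le> 4 / c1^2 * (1 / real N)"
proof -
  interpret prob_space M by fact
  have "0 < lam" "m / real N = lam" "m = lam * real N"
    using assms(2,7,8) by auto
  have "m * \<epsilon> ^ 2 = c * real N"
    using \<open>\<epsilon> > 0\<close> by (simp add: assms(6))
  then have "(2 * m * \<epsilon>) ^ 2 = 4 * c * lam * real N ^ 2"
    unfolding power2_eq_square by (simp add: \<open>m = lam * real N\<close> algebra_simps)
  also have "\<dots> \<le> c1 ^ 2 / 4 * lam * real N ^ 2"
    using \<open>c < c1^2 / 16\<close> \<open>0 < lam\<close> by (intro mult_right_mono) auto
  also have "\<dots> = (card {1..N} * c1 * sqrt lam / 2) ^ 2"
    using \<open>0 < lam\<close> by (simp add: power_mult_distrib power_divide)
  finally have "2 * m * \<epsilon> \<le> card {1..N} * c1 * sqrt lam / 2"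
    by (rule power2_le_imp_le) (use \<open>0 < lam\<close> in \<open>simp add: c1_def\<close>)
  then have "prob {x \<in> space M. (\<Sum>j=1..N. \<bar>real (Y j x) - lam\<bar>) < 2 * m * \<epsilon>}
      \<le> 4 / c1 ^ 2 * (1 / card {1..N})"
    using assms(2,8,9,10) by (intro poisson_sum_abs_deviation_lower_tail_c1) auto
  then show ?thesis
    by (simp add: \<open>m / real N = lam\<close>)
qed

end
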